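(* Let $b$ be a prime, $m$ a positive integer, $N=b^m$, and $w\ge0$ an integer. For $k\in\mathbb{Z}$ let $$T_{N,w}(k)=\sum_{z\in\mathcal{Z}_{N,w}}\ \sum_{\substack{-N/2<h\le N/2\\ h\ne0}}\frac{e^{2\pi i h k b^{w} z/N}}{|h|}.$$ Then $$\sum_{k=1}^{N-1}\frac{|T_{N,w}(k)|}{|\mathcal{Z}_{N,w}|}\le 2b^{\min\{w,m\}}S_N.$$
   Context: $\mathcal{Z}_{N,w}=\{z\in\{1,\dots,b^{m-w}-1\}:\gcd(z,b^m)=1\}$ if $w<m$, and $\mathcal{Z}_{N,w}=\{1\}$ if $w\ge m$. $S_N=\sum_{-N/2<h\le N/2,\,h\ne0}\frac{1}{|h|}$. *)

theory Defs
  imports "HOL-Analysis.Analysis" "HOL-Computational_Algebra.Primes"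
begin

definition Zset :: "nat \<Rightarrow> nat \<Rightarrow> nat \<Rightarrow> nat set" where
  "Zset b m w = (if w < m then {z \<in> {1..b^(m-w) - 1}. gcd z (b^m) = 1} else {1})"

definition Hset :: "nat \<Rightarrow> int set" where
  "Hset N = {h::int. - real N / 2 < real_of_int h \<and> real_of_int h \<le> real N / 2 \<and> h \<noteq> 0}"

definition S_N :: "nat \<Rightarrow> real" where
  "S_N N = (\<Sum>h\<in>Hset N. 1 / real_of_int \<bar>h\<bar>)"

definition T_Nw :: "nat \<Rightarrow> nat \<Rightarrow> nat \<Rightarrow> int \<Rightarrow> complex" where
  "T_Nw b m w k = (let N = b^m in
     (\<Sum>z\<in>Zset b m w. \<Sum>h\<in>Hset N.
        exp (2 * of_real pi * \<i> * of_int h * of_int k * of_nat (b^w) * of_nat z / of_nat N)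
          / of_int \<bar>h\<bar>))"

end

theory Submission
  imports Defs
begin

text \<open>
  Write \<open>M = b^(m-w)\<close>, so that \<open>N = M b^min(w,m)\<close> and \<open>T_{N,w}(k)\<close> only depends on \<open>k\<close>
  modulo \<open>M\<close>. If \<open>M\<close> divides \<open>k\<close> then every exponential is \<open>1\<close> and
  \<open>T_{N,w}(k) = |Z_{N,w}| S_N\<close>. Otherwise the sum over \<open>z\<close> is a Ramanujan sum modulo
  the prime power \<open>M\<close>, equal to \<open>M [M | hk] - (M/b) [M/b | hk]\<close>; since \<open>M \<nmid> k\<close>,
  \<open>M | hk\<close> forces \<open>b | h\<close>, and \<open>h \<mapsto> h/b\<close> shows that \<open>T_{N,w}(k)\<close> is a nonpositive real.
  Hence \<open>|T_{N,w}(k)| = -T_{N,w}(k)\<close> off the \<open>b^min(w,m) - 1\<close> nonzero multiples of \<open>M\<close>,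
  and orthogonality of characters gives \<open>\<Sum>\<^sub>k T_{N,w}(k) \<ge> 0\<close> over a full period,
  so the remaining terms contribute at most \<open>T_{N,w}(0) = |Z_{N,w}| S_N\<close>.
\<close>

definition root_of_unity_sum :: "nat \<Rightarrow> int \<Rightarrow> real" where
  "root_of_unity_sum n a = (if int n dvd a then real n else 0)"

lemma exp_2pi_int_eq_1: "exp (2 * of_real pi * \<i> * of_int j) = 1"
  by (metis exp_2pi_1_int mult.commute mult.left_commute)

lemma sum_roots_of_unity:
  assumes "n > 0"
  shows "(\<Sum>k<n. exp (2 * of_real pi * \<i> * of_int a * of_nat k / of_nat n))
       = of_real (root_of_unity_sum n a)"
proof -
  define \<omega> where "\<omega> = exp (2 * of_real pi * \<i> * of_int a / of_nat n)"
  have power: "exp (2 * of_real pi * \<i> * of_int a * of_nat k / of_nat n) = \<omega> ^ k" for k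
    unfolding \<omega>_def by (subst exp_of_nat_mult[symmetric]) (simp add: field_simps)
  have "\<omega> ^ n = 1"
    unfolding \<omega>_def using assms
    by (subst exp_of_nat_mult[symmetric]) (simp add: field_simps exp_2pi_int_eq_1)
  moreover have "\<omega> = 1 \<longleftrightarrow> int n dvd a"
  proof
    assume "\<omega> = 1"
    then obtain j :: int where "2 * pi * of_int a / of_nat n = of_int (2 * j) * pi"
      unfolding \<omega>_def exp_eq_1 by auto
    then have "of_int a = real n * of_int j" using assms by (simp add: field_simps)
    then have "a = int n * j" by (metis of_int_eq_iff of_int_mult of_int_of_nat_eq)
    then show "int n dvd a" by simp
  next
    assume "int n dvd a"
    then obtain j where "a = int n * j" by auto
    then show "\<omega> = 1" unfolding \<omega>_def using assms by (simp add: field_simps exp_2pi_int_eq_1)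
  qed
  ultimately show ?thesis
    by (auto simp: power geometric_sum root_of_unity_sum_def)
qed

lemma coprime_prime_power_right_iff:
  fixes p z :: nat
  assumes "prime p" and "m > 0"
  shows "coprime z (p ^ m) \<longleftrightarrow> \<not> p dvd z"
proof -
  have "coprime z p \<longleftrightarrow> \<not> p dvd z"
    using assms(1) by (auto intro: prime_imp_coprime simp: coprime_commute
        dest: coprime_common_divisor[of z p p] not_prime_unit)
  then show ?thesis using assms(2) by (simp add: coprime_power_right_iff)
qed

lemma Zset_eq_diff:
  assumes "prime b" and "m - w = Suc j"
  shows "Zset b m w = {..<b ^ Suc j} - (\<lambda>y. b * y) ` {..<b ^ j}"
proof -
  have "b > 0" using assms(1) prime_gt_0_nat by blast
  then have "z \<in> (\<lambda>y. b * y) ` {..<b ^ j} \<longleftrightarrow> b dvd z \<and> z < b ^ Suc j" for z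
    by (auto elim!: dvdE)
  moreover have "z \<in> Zset b m w \<longleftrightarrow> z < b ^ Suc j \<and> \<not> b dvd z" for z
    using assms coprime_prime_power_right_iff[OF assms(1), of m z]
    by (auto simp: Zset_def coprime_iff_gcd_eq_1 Suc_le_eq intro!: Nat.gr0I)
  ultimately show ?thesis by blast
qed

lemma finite_Zset: "finite (Zset b m w)"
  by (simp add: Zset_def)

lemma card_Zset_pos:
  assumes "prime b"
  shows "card (Zset b m w) > 0"
proof -
  have "1 < b" using assms prime_gt_1_nat by blast
  then have "1 < b^(m-w)" if "w < m"
    using that by (intro one_less_power) auto
  then have "1 \<in> Zset b m w"
    by (auto simp: Zset_def)
  then show ?thesis using finite_Zset by (auto simp: card_gt_0_iff)
qed

lemma sum_Zset_exp:
  assumes "prime b" and "m - w = Suc j"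
  shows "(\<Sum>z\<in>Zset b m w. exp (2 * of_real pi * \<i> * of_int a * of_nat z / of_nat (b ^ Suc j)))
       = of_real (root_of_unity_sum (b ^ Suc j) a - root_of_unity_sum (b ^ j) a)"
proof -
  have "b > 1" using assms(1) prime_gt_1_nat by blast
  let ?e = "\<lambda>M z. exp (2 * of_real pi * \<i> * of_int a * of_nat z / of_nat M) :: complex"
  have "(\<Sum>z\<in>Zset b m w. ?e (b ^ Suc j) z)
      = (\<Sum>z<b ^ Suc j. ?e (b ^ Suc j) z) - (\<Sum>z\<in>(\<lambda>y. b * y) ` {..<b ^ j}. ?e (b ^ Suc j) z)"
    unfolding Zset_eq_diff[OF assms] by (rule sum_diff) (use \<open>b > 1\<close> in auto)
  also have "(\<Sum>z\<in>(\<lambda>y. b * y) ` {..<b ^ j}. ?e (b ^ Suc j) z) = (\<Sum>y<b ^ j. ?e (b ^ j) y)"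
    using \<open>b > 1\<close> by (subst sum.reindex) (auto simp: inj_on_def field_simps intro!: sum.cong)
  moreover have "b ^ j > 0" and "b ^ Suc j > 0"
    using \<open>b > 1\<close> by simp_all
  ultimately show ?thesis
    by (simp only: sum_roots_of_unity of_real_diff)
qed

lemma finite_Hset: "finite (Hset N)"
proof (rule finite_subset)
  show "Hset N \<subseteq> {-int N..int N}"
    by (auto simp: Hset_def)
qed simp

lemma Hset_div:
  assumes "h \<in> Hset N" and "d dvd h" and "d > 0"
  shows "h div d \<in> Hset N"
proof -
  obtain q where q: "h = d * q" using assms(2) by blast
  have "q \<noteq> 0" using assms(1) q by (auto simp: Hset_def)
  then consider "0 < q" "q \<le> h" | "q < 0" "h \<le> q"
    using assms(3) q by (cases "q > 0") (auto simp: mult_le_cancel_right1 mult_le_cancel_right2)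
  then show ?thesis
    using assms q \<open>q \<noteq> 0\<close> unfolding Hset_def
    by (cases; simp only: mem_Collect_eq nonzero_mult_div_cancel_left; linarith)
qed

lemma S_N_nonneg: "S_N N \<ge> 0"
  unfolding S_N_def by (intro sum_nonneg) simp

lemma S_N_of_real: "(\<Sum>h\<in>Hset N. 1 / (of_int \<bar>h\<bar> :: complex)) = of_real (S_N N)"
  unfolding S_N_def of_real_sum
  by (intro sum.cong refl) (simp add: of_real_divide, metis of_int_abs of_real_of_int_eq)

lemma T_Nw_eq_sum_Hset:
  assumes "prime b" and "m - w = Suc j"
  shows "T_Nw b m w k = of_real (\<Sum>h\<in>Hset (b^m).
     (root_of_unity_sum (b ^ Suc j) (h * k) - root_of_unity_sum (b ^ j) (h * k))
       / real_of_int \<bar>h\<bar>)"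
proof -
  have "b > 0" using assms(1) prime_gt_0_nat by blast
  have "m = w + Suc j" using assms(2) by simp
  then have N: "b^m = b^w * b ^ Suc j" by (simp only: power_add)
  have exponent: "exp (2 * of_real pi * \<i> * of_int h * of_int k * of_nat (b^w) * of_nat z / of_nat (b^m))
      = exp (2 * of_real pi * \<i> * of_int (h * k) * of_nat z / of_nat (b ^ Suc j))" for h z
    using \<open>b > 0\<close> unfolding N by (simp add: field_simps)
  have "T_Nw b m w k = (\<Sum>h\<in>Hset (b^m). (\<Sum>z\<in>Zset b m w.
          exp (2 * of_real pi * \<i> * of_int (h * k) * of_nat z / of_nat (b ^ Suc j))) / of_int \<bar>h\<bar>)"
    unfolding T_Nw_def Let_def exponent
    by (subst sum.swap) (simp add: sum_divide_distrib)
  also have "\<dots> = (\<Sum>h\<in>Hset (b^m). of_real ((root_of_unity_sum (b ^ Suc j) (h * k)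
      - root_of_unity_sum (b ^ j) (h * k)) / real_of_int \<bar>h\<bar>))"
    unfolding sum_Zset_exp[OF assms]
    by (intro sum.cong refl) (simp add: of_real_divide, metis of_int_abs of_real_of_int_eq)
  finally show ?thesis
    unfolding of_real_sum .
qed

lemma sum_Hset_root_of_unity_sum_diff_nonpos:
  assumes "prime p" and "\<not> int (p ^ Suc j) dvd k"
  shows "(\<Sum>h\<in>Hset N. (root_of_unity_sum (p ^ Suc j) (h * k) - root_of_unity_sum (p ^ j) (h * k))
           / real_of_int \<bar>h\<bar>) \<le> 0"
proof -
  define D1 where "D1 = {h \<in> Hset N. int (p ^ Suc j) dvd h * k}"
  define D2 where "D2 = {h \<in> Hset N. int (p ^ j) dvd h * k}"
  have "p > 0" using assms(1) prime_gt_0_nat by blast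
  have p_dvd: "int p dvd h" if "h \<in> D1" for h
  proof (rule ccontr)
    assume "\<not> int p dvd h"
    with assms(1) have "coprime (int p ^ Suc j) h"
      by (simp add: coprime_power_left_iff prime_imp_coprime)
    with that have "int (p ^ Suc j) dvd k"
      unfolding D1_def by (simp add: coprime_dvd_mult_right_iff)
    with assms(2) show False ..
  qed
  have inj: "inj_on (\<lambda>h. h div int p) D1"
    by (rule inj_onI) (metis p_dvd dvd_div_mult_self)
  have image: "(\<lambda>h. h div int p) ` D1 \<subseteq> D2"
  proof
    fix x assume "x \<in> (\<lambda>h. h div int p) ` D1"
    then obtain h where h: "h \<in> D1" and x: "x = h div int p" by blast
    obtain q where q: "h = int p * q" using p_dvd[OF h] by blast
    have "int p * int (p ^ j) dvd int p * (q * k)"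
      using h q unfolding D1_def by (simp add: mult.assoc)
    then have "int (p ^ j) dvd x * k"
      using \<open>p > 0\<close> q x by simp
    moreover have "x \<in> Hset N"
      using h p_dvd[OF h] \<open>p > 0\<close> x unfolding D1_def by (simp add: Hset_div)
    ultimately show "x \<in> D2" unfolding D2_def by simp
  qed
  have "(\<Sum>h\<in>Hset N. (root_of_unity_sum (p ^ Suc j) (h * k) - root_of_unity_sum (p ^ j) (h * k))
           / real_of_int \<bar>h\<bar>)
      = (\<Sum>h\<in>Hset N. (if int (p ^ Suc j) dvd h * k then real (p ^ Suc j) / real_of_int \<bar>h\<bar> else 0)
          - (if int (p ^ j) dvd h * k then real (p ^ j) / real_of_int \<bar>h\<bar> else 0))"
    by (intro sum.cong refl) (simp add: root_of_unity_sum_def diff_divide_distrib)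
  also have "\<dots> = (\<Sum>h\<in>D1. real (p ^ Suc j) / real_of_int \<bar>h\<bar>)
      - (\<Sum>h\<in>D2. real (p ^ j) / real_of_int \<bar>h\<bar>)"
    unfolding D1_def D2_def by (simp only: sum_subtractf sum.inter_filter[OF finite_Hset])
  also have "(\<Sum>h\<in>D1. real (p ^ Suc j) / real_of_int \<bar>h\<bar>)
      = (\<Sum>h\<in>(\<lambda>h. h div int p) ` D1. real (p ^ j) / real_of_int \<bar>h\<bar>)"
    unfolding sum.reindex[OF inj] using \<open>p > 0\<close>
    by (intro sum.cong refl) (auto dest!: p_dvd simp: abs_mult)
  also have "\<dots> \<le> (\<Sum>h\<in>D2. real (p ^ j) / real_of_int \<bar>h\<bar>)"
    by (rule sum_mono2[OF _ image]) (simp_all add: D2_def finite_Hset)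
  finally show ?thesis by simp
qed

lemma norm_T_Nw_off_multiples:
  assumes "prime b" and "\<not> int (b^(m-w)) dvd k"
  shows "norm (T_Nw b m w k) = - Re (T_Nw b m w k)"
proof -
  obtain j where j: "m - w = Suc j"
    using assms(2) by (cases "m - w") auto
  define r where "r = (\<Sum>h\<in>Hset (b^m).
     (root_of_unity_sum (b ^ Suc j) (h * k) - root_of_unity_sum (b ^ j) (h * k)) / real_of_int \<bar>h\<bar>)"
  have "T_Nw b m w k = of_real r"
    unfolding r_def by (rule T_Nw_eq_sum_Hset[OF assms(1) j])
  moreover have "r \<le> 0"
    unfolding r_def using assms(2) unfolding j by (rule sum_Hset_root_of_unity_sum_diff_nonpos[OF assms(1)])
  ultimately show ?thesis by simp
qed

lemma T_Nw_at_multiples: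
  assumes "b > 0" and "int (b^(m-w)) dvd k"
  shows "T_Nw b m w k = of_real (real (card (Zset b m w)) * S_N (b^m))"
proof -
  obtain j where j: "k = int (b^(m-w)) * j" using assms(2) by blast
  have N: "b^w * b^(m-w) = b^m * b^(w-m)"
    by (cases "w \<le> m") (simp_all flip: power_add)
  have "exp (2 * of_real pi * \<i> * of_int h * of_int k * of_nat (b^w) * of_nat z / of_nat (b^m)) = 1"
    for h z
  proof -
    have "(of_nat (b^w) * of_nat (b^(m-w)) :: complex) = of_nat (b^m) * of_nat (b^(w-m))"
      by (metis N of_nat_mult)
    then have "2 * of_real pi * \<i> * of_int h * of_int k * of_nat (b^w) * of_nat z / of_nat (b^m)
        = 2 * of_real pi * \<i> * (of_int (h * j * int z * int (b^(w-m))) :: complex)"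
      using assms(1) unfolding j by (simp add: field_simps)
    then show ?thesis by (simp only: exp_2pi_int_eq_1)
  qed
  then have "T_Nw b m w k = (\<Sum>z\<in>Zset b m w. \<Sum>h\<in>Hset (b^m). 1 / of_int \<bar>h\<bar>)"
    unfolding T_Nw_def Let_def by simp
  then show ?thesis by (simp add: S_N_of_real)
qed

lemma sum_T_Nw_nonneg:
  assumes "b > 0"
  shows "Re (\<Sum>k=0..int (b^m) - 1. T_Nw b m w k) \<ge> 0"
proof -
  define N where "N = b^m"
  have "N > 0" unfolding N_def using assms by simp
  have "{0..int N - 1} = int ` {..<N}"
    by (auto simp: image_iff intro!: bexI[of _ "nat x" for x])
  then have "(\<Sum>k=0..int N - 1. T_Nw b m w k) = (\<Sum>k<N. T_Nw b m w (int k))"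
    by (simp add: sum.reindex)
  also have "\<dots> = (\<Sum>z\<in>Zset b m w. \<Sum>h\<in>Hset N. (\<Sum>k<N.
      exp (2 * of_real pi * \<i> * of_int (h * int (b^w * z)) * of_nat k / of_nat N)) / of_int \<bar>h\<bar>)"
    unfolding T_Nw_def Let_def N_def[symmetric] sum_divide_distrib
    by (subst sum.swap, subst (2) sum.swap) (simp add: field_simps)
  also have "\<dots> = of_real (\<Sum>z\<in>Zset b m w. \<Sum>h\<in>Hset N.
      root_of_unity_sum N (h * int (b^w * z)) / real_of_int \<bar>h\<bar>)"
    unfolding sum_roots_of_unity[OF \<open>N > 0\<close>] of_real_sum
    by (intro sum.cong refl) (simp add: of_real_divide, metis of_int_abs of_real_of_int_eq)
  finally show ?thesis
    unfolding N_def by (auto simp: root_of_unity_sum_def intro!: sum_nonneg)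
qed

lemma norm_T_Nw:
  assumes "prime b"
  shows "norm (T_Nw b m w k) = 2 * (if int (b^(m-w)) dvd k
      then real (card (Zset b m w)) * S_N (b^m) else 0) - Re (T_Nw b m w k)"
proof (cases "int (b^(m-w)) dvd k")
  case True
  define C where "C = real (card (Zset b m w)) * S_N (b^m)"
  have "C \<ge> 0" unfolding C_def by (simp add: S_N_nonneg)
  moreover have "T_Nw b m w k = of_real C"
    unfolding C_def using True assms prime_gt_0_nat by (blast intro: T_Nw_at_multiples)
  ultimately show ?thesis using True unfolding C_def[symmetric] by simp
next
  case False
  then show ?thesis using norm_T_Nw_off_multiples[OF assms] by simp
qed

lemma card_multiples_le:
  assumes "M > 0"
  shows "card {k \<in> {1..int (M * P) - 1}. int M dvd k} \<le> P - 1"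
proof -
  have "{k \<in> {1..int (M * P) - 1}. int M dvd k} \<subseteq> (\<lambda>j. int M * j) ` {1..int P - 1}"
  proof
    fix k assume "k \<in> {k \<in> {1..int (M * P) - 1}. int M dvd k}"
    then obtain j where k: "k = int M * j" "0 < int M * j" "int M * j < int M * int P"
      by auto
    then have "1 \<le> j" "j < int P" using assms by (simp_all add: zero_less_mult_iff)
    then show "k \<in> (\<lambda>j. int M * j) ` {1..int P - 1}" using k(1) by auto
  qed
  then have "card {k \<in> {1..int (M * P) - 1}. int M dvd k} \<le> card ((\<lambda>j. int M * j) ` {1..int P - 1})"
    by (rule card_mono[rotated]) simp
  also have "\<dots> \<le> card {1..int P - 1}" by (rule card_image_le) simp
  finally show ?thesis by simp
qed

lemma sum_norm_T_Nw_le: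
  assumes "prime b"
  shows "(\<Sum>k=1..int (b^m) - 1. norm (T_Nw b m w k))
           \<le> 2 * real b ^ min w m * (real (card (Zset b m w)) * S_N (b^m))"
proof -
  define C where "C = real (card (Zset b m w)) * S_N (b^m)"
  define K where "K = {1..int (b^m) - 1}"
  define P where "P = b ^ min w m"
  have "b > 0" using assms prime_gt_0_nat by blast
  have "C \<ge> 0" unfolding C_def by (simp add: S_N_nonneg)
  have N: "b^m = b^(m-w) * P"
    unfolding P_def by (cases "w < m") (simp_all flip: power_add)
  have multiples: "card {k \<in> K. int (b^(m-w)) dvd k} \<le> P - 1"
    unfolding K_def N by (rule card_multiples_le) (use \<open>b > 0\<close> in simp)
  have "{0..int (b^m) - 1} = insert 0 K"
    unfolding K_def using \<open>b > 0\<close> by auto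
  then have "Re (\<Sum>k=0..int (b^m) - 1. T_Nw b m w k) = C + Re (\<Sum>k\<in>K. T_Nw b m w k)"
    using \<open>b > 0\<close> by (simp add: K_def T_Nw_at_multiples C_def)
  then have rest: "- Re (\<Sum>k\<in>K. T_Nw b m w k) \<le> C"
    using sum_T_Nw_nonneg[OF \<open>b > 0\<close>, of m w] by linarith
  have "(\<Sum>k\<in>K. norm (T_Nw b m w k))
      = 2 * (\<Sum>k\<in>K. if int (b^(m-w)) dvd k then C else 0) - Re (\<Sum>k\<in>K. T_Nw b m w k)"
    unfolding C_def by (simp add: norm_T_Nw[OF assms] sum_subtractf Re_sum sum_distrib_left)
  also have "\<dots> = 2 * C * card {k \<in> K. int (b^(m-w)) dvd k} - Re (\<Sum>k\<in>K. T_Nw b m w k)"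
    by (simp add: sum.inter_filter[symmetric] K_def)
  also have "\<dots> \<le> 2 * C * (P - 1) + C"
  proof -
    have "2 * C * card {k \<in> K. int (b^(m-w)) dvd k} \<le> 2 * C * (P - 1)"
      using multiples \<open>C \<ge> 0\<close> by (intro mult_left_mono) simp_all
    then show ?thesis using rest by linarith
  qed
  also have "\<dots> \<le> 2 * P * C"
    using \<open>C \<ge> 0\<close> \<open>b > 0\<close> by (simp add: P_def of_nat_diff algebra_simps)
  finally show ?thesis
    unfolding K_def C_def P_def by simp
qed

theorem lemma1:
  fixes b m w :: nat
  assumes "prime b" and "m > 0"
  shows "(\<Sum>k=1..int (b^m) - 1. norm (T_Nw b m w k) / real (card (Zset b m w)))
           \<le> 2 * real b ^ (min w m) * S_N (b^m)"
proof -
  have "card (Zset b m w) > 0" using card_Zset_pos[OF assms(1)] .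
  then show ?thesis
    using sum_norm_T_Nw_le[OF assms(1), of m w]
    by (simp add: sum_divide_distrib[symmetric] divide_le_eq mult_ac)
qed

end
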